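(* Let $d\ge2$, $q\ge2$ and $1\le p\le q-1$ with $\gcd(p,q)=1$. For $k\ge1$ let $N_k$ be the number of $\sigma_d$-rotational sets $A\subset\mathbb{T}$ that are the union of exactly $k$ distinct $\sigma_d$-orbits and have rotation number $p/q$ (that is, $|A|=kq$ and, listing $A=\{u_0<\dots<u_{kq-1}\}$, $\sigma_d(u_j)=u_{j+kp}$ for all $j\in\mathbb{Z}/kq\mathbb{Z}$). Then $$N_1=\binom{d-2+q}{d-2},\qquad N_k=\binom{d-2+kq}{d-2}-\sum_{j=1}^{k-1}\binom{k-1}{j-1}N_j\quad\text{for }2\le k\le d-1.$$
   Context: $\mathbb{T}=\mathbb{R}/\mathbb{Z}$, ordered by representatives in $[0,1)$; $\sigma_d(t)=dt$. A finite set $\{u_0<\dots<u_{N-1}\}\subset\mathbb{T}$ (indices in $\mathbb{Z}/N\mathbb{Z}$) is $\sigma_d$-rotational if for some fixed $0\ne P\in\mathbb{Z}/N\mathbb{Z}$, $\sigma_d(u_j)=u_{j+P}$ for all $j$; its rotation number is $P/N$. *)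

theory Defs
  imports Complex_Main
begin

text \<open>The circle T = R/Z is represented by the interval [0,1) of representatives,
  ordered as reals.  The doubling-type map sigma_d(t) = d t mod 1.\<close>

definition sigma :: "nat \<Rightarrow> real \<Rightarrow> real" where
  "sigma d t = frac (real d * t)"

definition rotational_set :: "nat \<Rightarrow> nat \<Rightarrow> nat \<Rightarrow> real set \<Rightarrow> bool" where
  "rotational_set d N P A \<longleftrightarrow>
     A \<subseteq> {0..<1} \<and> finite A \<and> card A = N \<and>
     (\<forall>j<N. sigma d (sorted_list_of_set A ! j) = sorted_list_of_set A ! ((j + P) mod N))"

definition Nrot :: "nat \<Rightarrow> nat \<Rightarrow> nat \<Rightarrow> nat \<Rightarrow> nat" where
  "Nrot d p q k = card {A. rotational_set d (k * q) (k * p) A}"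

end

theory Submission
  imports Defs "HOL-Number_Theory.Cong"
begin

text \<open>Let \<open>A = {u\<^sub>0 < \<dots> < u\<^sub>n\<^sub>-\<^sub>1}\<close> be rotational with \<open>n = k q\<close> and step \<open>P = k p\<close>.
  Lifting \<open>A\<close> to \<open>\<real>\<close> from a chosen base point gives an increasing sequence \<open>L\<close> with
  \<open>L (j + n) = L j + 1\<close> and \<open>d L j - L (j + P) \<in> \<int>\<close>. Its gaps \<open>\<Delta>\<^sub>j = L (j + 1) - L j\<close> satisfy
  \<open>d \<Delta>\<^sub>j - \<Delta>\<^sub>j\<^sub>+\<^sub>P = m\<^sub>j\<close> with \<open>m\<^sub>j \<in> \<nat>\<close> and \<open>\<Sum> m\<^sub>j = d - 1\<close>; this recurrence has a unique periodic
  solution, and since the orbit of \<open>j\<close> under \<open>j \<mapsto> j + P\<close> modulo \<open>n\<close> is the residue class of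
  \<open>j\<close> modulo \<open>k\<close> (as \<open>p\<close> and \<open>q\<close> are coprime), the solution is positive iff every residue class
  carries some \<open>m\<^sub>j > 0\<close>. Together with the integer \<open>d L 0 - L P \<in> {0..d-2}\<close>, this makes the
  pairs (set, base point) correspond bijectively to pairs (\<open>k \<times> q\<close> array of naturals with sum
  \<open>d - 1\<close> and no zero row, \<open>t < d - 1\<close>), so \<open>k q N\<^sub>k = (d - 1) F\<^sub>k\<close> with \<open>F\<^sub>k\<close> the number
  of such arrays. Sorting all arrays by their set of nonzero rows gives \<open>\<Sum>\<^sub>j (k choose j) F\<^sub>j = (d - 2 + k q choose d - 1)\<close>, and the recursion
  follows by binomial absorption.\<close>

definition row_arrays :: "(nat list \<Rightarrow> bool) \<Rightarrow> nat \<Rightarrow> nat \<Rightarrow> nat \<Rightarrow> nat list list set" where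
  "row_arrays Q k q s = {R. length R = k \<and> (\<forall>r\<in>set R. length r = q \<and> Q r) \<and> sum_list (map sum_list R) = s}"

abbreviation all_row_arrays :: "nat \<Rightarrow> nat \<Rightarrow> nat \<Rightarrow> nat list list set" where
  "all_row_arrays \<equiv> row_arrays (\<lambda>_. True)"

abbreviation nonzero_row_arrays :: "nat \<Rightarrow> nat \<Rightarrow> nat \<Rightarrow> nat list list set" where
  "nonzero_row_arrays \<equiv> row_arrays (\<lambda>r. 0 < sum_list r)"

lemma member_le_sum_list_nat: "x \<in> set (xs :: nat list) \<Longrightarrow> x \<le> sum_list xs"
  using member_le_sum_list[of x xs] by simp

lemma finite_length_sum_list_eq: "finite {r :: nat list. length r = q \<and> sum_list r = a}"
proof (rule finite_subset)
  show "{r. length r = q \<and> sum_list r = a} \<subseteq> {r. set r \<subseteq> {0..a} \<and> length r = q}"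
    using member_le_sum_list_nat by fastforce
qed (rule finite_lists_length_eq, simp)

lemma finite_row_arrays: "finite (row_arrays Q k q s)"
proof (rule finite_subset)
  let ?rows = "\<Union>a\<le>s. {r :: nat list. length r = q \<and> sum_list r = a}"
  show "row_arrays Q k q s \<subseteq> {R. set R \<subseteq> ?rows \<and> length R = k}"
    using member_le_sum_list_nat by (fastforce simp: row_arrays_def)
  show "finite {R. set R \<subseteq> ?rows \<and> length R = k}"
    by (intro finite_lists_length_eq finite_UN_I finite_atMost finite_length_sum_list_eq)
qed

lemma row_arrays_Suc:
  "row_arrays Q (Suc k) q s =
    (\<Union>a\<le>s. (\<lambda>(r, R). r # R) ` ({r. length r = q \<and> Q r \<and> sum_list r = a} \<times> row_arrays Q k q (s - a)))"
  by (auto simp: row_arrays_def length_Suc_conv image_iff)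

lemma card_row_arrays_Suc:
  "card (row_arrays Q (Suc k) q s) =
    (\<Sum>a\<le>s. card {r. length r = q \<and> Q r \<and> sum_list r = a} * card (row_arrays Q k q (s - a)))"
proof -
  have "finite {r. length r = q \<and> Q r \<and> sum_list r = a}" for a
    by (rule finite_subset[OF _ finite_length_sum_list_eq[of q a]]) auto
  moreover have "inj_on (\<lambda>(r, R). r # R) X" for X :: "(nat list \<times> nat list list) set"
    by (auto simp: inj_on_def)
  ultimately show ?thesis unfolding row_arrays_Suc
    by (subst card_UN_disjoint)
       (simp_all add: finite_row_arrays card_image card_cartesian_product, auto)
qed

lemma card_all_row_arrays_Suc:
  "card (all_row_arrays (Suc k) q s) = card (all_row_arrays k q s)
     + (\<Sum>a=1..s. card {r. length r = q \<and> sum_list r = a} * card (all_row_arrays k q (s - a)))"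
proof -
  have "card {r :: nat list. length r = q \<and> sum_list r = 0} = 1"
    using card_length_sum_list[of q 0] by simp
  then show ?thesis
    by (simp add: card_row_arrays_Suc atMost_atLeast0 sum.atLeast_Suc_atMost del: sum_list_eq_0_iff)
qed

lemma card_nonzero_row_arrays_Suc:
  "card (nonzero_row_arrays (Suc k) q s) =
     (\<Sum>a=1..s. card {r. length r = q \<and> sum_list r = a} * card (nonzero_row_arrays k q (s - a)))"
proof -
  have "{r. length r = q \<and> 0 < sum_list r \<and> sum_list r = a} =
      (if a = 0 then {} else {r. length r = q \<and> sum_list r = a})" for a :: nat
    by auto
  then show ?thesis by (simp add: card_row_arrays_Suc atMost_atLeast0 sum.atLeast_Suc_atMost)
qed

lemma sum_choose_Suc:
  fixes f :: "nat \<Rightarrow> nat"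
  shows "(\<Sum>j\<le>Suc k. (Suc k choose j) * f j) = (\<Sum>j\<le>k. (k choose j) * f j) + (\<Sum>j\<le>k. (k choose j) * f (Suc j))"
proof -
  have "(\<Sum>j\<le>Suc k. (Suc k choose j) * f j) = f 0 + (\<Sum>j\<le>k. (Suc k choose Suc j) * f (Suc j))"
    by (subst sum.atMost_Suc_shift) simp
  moreover have "(\<Sum>j\<le>k. (k choose j) * f j) = f 0 + (\<Sum>j<k. (k choose Suc j) * f (Suc j))"
    by (simp add: sum.atMost_shift)
  moreover have "(\<Sum>j\<le>k. (k choose Suc j) * f (Suc j)) = (\<Sum>j<k. (k choose Suc j) * f (Suc j))"
    by (simp flip: lessThan_Suc_atMost)
  ultimately show ?thesis by (simp add: sum.distrib algebra_simps)
qed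

lemma card_all_row_arrays_binomial_sum:
  "card (all_row_arrays k q s) = (\<Sum>j\<le>k. (k choose j) * card (nonzero_row_arrays j q s))"
proof (induction k arbitrary: s)
  case 0
  have "all_row_arrays 0 q s = nonzero_row_arrays 0 q s" by (auto simp: row_arrays_def)
  then show ?case by simp
next
  case (Suc k)
  let ?c = "\<lambda>a. card {r :: nat list. length r = q \<and> sum_list r = a}"
  have "(\<Sum>a=1..s. ?c a * card (all_row_arrays k q (s - a)))
      = (\<Sum>a=1..s. \<Sum>j\<le>k. (k choose j) * (?c a * card (nonzero_row_arrays j q (s - a))))"
    by (simp add: Suc.IH sum_distrib_left algebra_simps)
  also have "\<dots> = (\<Sum>j\<le>k. (k choose j) * card (nonzero_row_arrays (Suc j) q s))"
    by (subst sum.swap) (simp add: sum_distrib_left card_nonzero_row_arrays_Suc)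
  finally show ?case
    unfolding card_all_row_arrays_Suc sum_choose_Suc Suc.IH by simp
qed

lemma sum_list_concat: "sum_list (concat xss) = sum_list (map sum_list (xss :: 'a :: monoid_add list list))"
  by (induction xss) auto

lemma concat_chunks_exist:
  "length l = k * q \<Longrightarrow> \<exists>R. length R = k \<and> (\<forall>r\<in>set R. length r = q) \<and> concat R = l"
proof (induction k arbitrary: l)
  case (Suc k)
  then obtain R where "length R = k" "\<forall>r\<in>set R. length r = q" "concat R = drop q l"
    by (metis diff_add_inverse length_drop mult_Suc)
  then show ?case
    using Suc.prems by (intro exI[of _ "take q l # R"]) auto
qed simp

lemma card_all_row_arrays: "card (all_row_arrays k q s) = (s + k * q - 1) choose s"
proof -
  have "bij_betw concat (all_row_arrays k q s) {l. length l = k * q \<and> sum_list l = s}"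
  proof (rule bij_betw_imageI)
    show "inj_on concat (all_row_arrays k q s)"
      by (auto simp: inj_on_def row_arrays_def set_zip intro!: concat_injective)
    show "concat ` all_row_arrays k q s = {l. length l = k * q \<and> sum_list l = s}"
    proof (intro equalityI subsetI)
      fix l assume l: "l \<in> {l. length l = k * q \<and> sum_list l = s}"
      then obtain R where "length R = k" "\<forall>r\<in>set R. length r = q" "concat R = l"
        using concat_chunks_exist by blast
      with l show "l \<in> concat ` all_row_arrays k q s"
        by (auto simp: row_arrays_def sum_list_concat intro!: image_eqI[of _ _ R])
    qed (auto simp: row_arrays_def sum_list_concat length_concat sum_list_triv cong: map_cong)
  qed
  then show ?thesis
    using card_length_sum_list[of "k * q" s] by (simp add: bij_betw_same_card)
qed

definition periodic :: "nat \<Rightarrow> (nat \<Rightarrow> 'a) \<Rightarrow> bool" where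
  "periodic n f \<longleftrightarrow> (\<forall>j. f (j + n) = f j)"

lemma periodic_add_mult:
  assumes "periodic n f"
  shows "f (j + c * n) = f j"
proof (induction c)
  case (Suc c)
  have "f ((j + c * n) + n) = f j" using assms Suc by (simp add: periodic_def)
  then show ?case by (simp add: algebra_simps)
qed simp

lemma periodic_mod: "periodic n f \<Longrightarrow> f (j mod n) = f j"
  using periodic_add_mult[of n f "j mod n" "j div n"] by simp

lemma periodic_mult: "periodic n f \<Longrightarrow> periodic (c * n) f"
  by (simp add: periodic_def periodic_add_mult)

lemma sum_periodic_shift:
  fixes f :: "nat \<Rightarrow> 'a :: cancel_comm_monoid_add"
  assumes "periodic n f"
  shows "(\<Sum>j<n. f (j + c)) = (\<Sum>j<n. f j)"
proof (induction c)
  case (Suc c)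
  have "(\<Sum>j<n. f (Suc j + c)) + f c = (\<Sum>j<n. f (j + c)) + f (n + c)"
    using sum.lessThan_Suc_shift[of "\<lambda>j. f (j + c)" n] sum.lessThan_Suc[of "\<lambda>j. f (j + c)" n]
    by (simp add: add.commute)
  also have "f (n + c) = f c"
    using assms by (simp add: periodic_def add.commute)
  finally show ?case using Suc by simp
qed simp

text \<open>The solution of \<open>D (j + P) = d * D j - m j\<close> that is periodic with period \<open>q * P\<close>.\<close>

definition recurrence_solution :: "nat \<Rightarrow> nat \<Rightarrow> nat \<Rightarrow> (nat \<Rightarrow> real) \<Rightarrow> nat \<Rightarrow> real" where
  "recurrence_solution d q P m j = (\<Sum>i<q. real d ^ (q - 1 - i) * m (j + i * P)) / (real d ^ q - 1)"

lemma recurrence_iterate: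
  fixes D m :: "nat \<Rightarrow> real"
  assumes rec: "\<And>j. D (j + P) = real d * D j - m j"
  shows "real d ^ s * D j = D (j + s * P) + (\<Sum>i<s. real d ^ (s - 1 - i) * m (j + i * P))"
proof (induction s)
  case (Suc s)
  have "real d ^ Suc s * D j = real d * (real d ^ s * D j)" by simp
  also have "\<dots> = real d * D (j + s * P) + (\<Sum>i<s. real d * real d ^ (s - 1 - i) * m (j + i * P))"
    unfolding Suc by (simp add: distrib_left sum_distrib_left mult.assoc)
  also have "real d * D (j + s * P) = D (j + Suc s * P) + m (j + s * P)"
    using rec[of "j + s * P"] by (simp add: algebra_simps)
  also have "(\<Sum>i<s. real d * real d ^ (s - 1 - i) * m (j + i * P)) = (\<Sum>i<s. real d ^ (Suc s - 1 - i) * m (j + i * P))"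
    by (intro sum.cong) (auto simp: Suc_diff_Suc simp flip: power_Suc)
  finally show ?case by (simp add: algebra_simps)
qed simp

lemma one_less_real_power: "2 \<le> d \<Longrightarrow> 0 < q \<Longrightarrow> 1 < real d ^ q"
  by (intro one_less_power) auto

lemma periodic_recurrence_unique:
  fixes D m :: "nat \<Rightarrow> real"
  assumes rec: "\<And>j. D (j + P) = real d * D j - m j" and per: "periodic (q * P) D"
    and "2 \<le> d" "0 < q"
  shows "D j = recurrence_solution d q P m j"
proof -
  have "real d ^ q * D j = D (j + q * P) + (\<Sum>i<q. real d ^ (q - 1 - i) * m (j + i * P))"
    by (rule recurrence_iterate) (rule rec)
  also have "D (j + q * P) = D j" using per by (simp add: periodic_def)
  finally show ?thesis
    using one_less_real_power[OF assms(3,4)] by (simp add: recurrence_solution_def field_simps)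
qed

lemma recurrence_solution_rec:
  assumes per: "periodic (q * P) m" and "2 \<le> d" "0 < q"
  shows "recurrence_solution d q P m (j + P) = real d * recurrence_solution d q P m j - m j"
proof -
  define a where "a i = real d ^ (q - i) * m (j + i * P)" for i
  have shifted: "(\<Sum>i<q. real d ^ (q - 1 - i) * m (j + P + i * P)) = (\<Sum>i<q. a (Suc i))"
    by (intro sum.cong) (auto simp: a_def algebra_simps)
  have scaled: "real d * (\<Sum>i<q. real d ^ (q - 1 - i) * m (j + i * P)) = (\<Sum>i<q. a i)"
    unfolding sum_distrib_left
    by (intro sum.cong) (auto simp: a_def Suc_diff_Suc simp flip: power_Suc)
  have "a q = m j" "a 0 = real d ^ q * m j"
    using per by (simp_all add: a_def periodic_def)
  then have "(\<Sum>i<q. a (Suc i)) = (\<Sum>i<q. a i) + m j - real d ^ q * m j"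
    using sum_lessThan_telescope[of a q] by (simp add: sum_subtractf)
  then show ?thesis
    using one_less_real_power[OF assms(2,3)]
    unfolding recurrence_solution_def shifted scaled[symmetric] by (simp add: field_simps)
qed

lemma periodic_recurrence_solution:
  assumes "periodic n m"
  shows "periodic n (recurrence_solution d q P m)"
proof -
  have "m (j + n + i * P) = m (j + i * P)" for i j
    using assms unfolding periodic_def by (metis add.commute add.left_commute)
  then show ?thesis by (simp add: periodic_def recurrence_solution_def)
qed

lemma sum_periodic_recurrence:
  fixes g m :: "nat \<Rightarrow> real"
  assumes "periodic n g" and "\<And>j. g (j + P) = real d * g j - m j"
  shows "(real d - 1) * (\<Sum>j<n. g j) = (\<Sum>j<n. m j)"
proof -
  have "(\<Sum>j<n. g j) = (\<Sum>j<n. g (j + P))" by (rule sum_periodic_shift[OF assms(1), symmetric])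
  also have "\<dots> = real d * (\<Sum>j<n. g j) - (\<Sum>j<n. m j)"
    by (simp add: assms(2) sum_subtractf sum_distrib_left)
  finally show ?thesis by (simp add: algebra_simps)
qed

lemma Ints_nonneg_if_greater_minus_1: "(x :: real) \<in> \<int> \<Longrightarrow> -1 < x \<Longrightarrow> 0 \<le> x"
  by (elim Ints_cases) simp

text \<open>The rows are the residue classes modulo \<open>k\<close>: these are the orbits of \<open>j \<mapsto> j + k p\<close>
  modulo \<open>k q\<close> when \<open>p\<close> and \<open>q\<close> are coprime (\<open>orbit_mod_eq\<close>).\<close>

definition matrix_of :: "nat \<Rightarrow> nat \<Rightarrow> (nat \<Rightarrow> 'a) \<Rightarrow> 'a list list" where
  "matrix_of k q f = map (\<lambda>r. map (\<lambda>l. f (r + k * l)) [0..<q]) [0..<k]"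

definition matrix_entry :: "nat \<Rightarrow> nat \<Rightarrow> 'a list list \<Rightarrow> nat \<Rightarrow> 'a" where
  "matrix_entry k q R j = R ! (j mod k) ! (j mod (k * q) div k)"

lemma periodic_matrix_entry: "periodic (k * q) (matrix_entry k q R)"
  by (simp add: periodic_def matrix_entry_def)

lemma add_mult_mod_mult:
  fixes r k a q :: nat
  assumes "r < k"
  shows "(r + k * a) mod (k * q) = r + k * (a mod q)"
proof -
  have "(r + k * a) div k = a" "(r + k * a) mod k = r"
    using assms by simp_all
  then show ?thesis by (simp add: mod_mult2_eq)
qed

lemma matrix_entry_add_mult: "r < k \<Longrightarrow> l < q \<Longrightarrow> matrix_entry k q R (r + k * l) = R ! r ! l"
  by (simp add: matrix_entry_def add_mult_mod_mult)

lemma matrix_entry_matrix_of: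
  assumes "j < k * q"
  shows "matrix_entry k q (matrix_of k q f) j = f j"
proof -
  have "0 < k" using assms by (cases k) auto
  then have "j mod k < k" "j div k < q"
    using assms by (auto intro: less_mult_imp_div_less simp: mult.commute)
  then show ?thesis using assms by (simp add: matrix_entry_def matrix_of_def)
qed

lemma matrix_of_matrix_entry:
  assumes "length R = k" "\<forall>r\<in>set R. length r = q"
  shows "matrix_of k q (matrix_entry k q R) = R"
  using assms by (auto simp: matrix_of_def matrix_entry_add_mult intro!: nth_equalityI)

lemma sum_add_mult_split:
  fixes f :: "nat \<Rightarrow> 'a :: comm_monoid_add"
  shows "(\<Sum>j<k * q. f j) = (\<Sum>r<k. \<Sum>l<q. f (r + k * l))"
proof -
  have "(\<Sum>j<k * q. f j) = (\<Sum>l<q. \<Sum>j\<in>{l * k..<l * k + k}. f j)"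
    by (simp add: sum.nat_group mult.commute)
  also have "\<dots> = (\<Sum>l<q. \<Sum>r<k. f (r + k * l))"
    by (simp add: sum.atLeastLessThan_shift_0 atLeast0LessThan algebra_simps)
  finally show ?thesis by (subst sum.swap)
qed

lemma sum_list_matrix_of:
  "sum_list (map sum_list (matrix_of k q f)) = (\<Sum>j<k * q. (f j :: 'a :: comm_monoid_add))"
  by (simp add: matrix_of_def sum_add_mult_split sum_list_sum_nth atLeast0LessThan)

lemma coprime_ex_mod_add_mult_eq:
  fixes p q :: nat
  assumes "coprime p q" "l < q"
  shows "\<exists>i<q. (c + i * p) mod q = l"
proof -
  let ?f = "\<lambda>i. (c + i * p) mod q"
  have "inj_on ?f {..<q}"
  proof (rule inj_onI)
    fix i i' assume "i \<in> {..<q}" "i' \<in> {..<q}" "?f i = ?f i'"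
    then have "[c + i * p = c + i' * p] (mod q)" "i < q" "i' < q"
      by (simp_all add: cong_def)
    then have "[i * p = i' * p] (mod q)" by (simp add: cong_add_lcancel_nat)
    then have "[i = i'] (mod q)" using assms(1) by (rule cong_mult_rcancel_nat[THEN iffD1, rotated])
    with \<open>i < q\<close> \<open>i' < q\<close> show "i = i'" by (simp add: cong_def)
  qed
  moreover have "?f ` {..<q} \<subseteq> {..<q}" using assms(2) by auto
  ultimately have "?f ` {..<q} = {..<q}" by (simp add: endo_inj_surj)
  then have "l \<in> ?f ` {..<q}" using assms(2) by simp
  then show ?thesis by auto
qed

locale circle_lifts =
  fixes d n P :: nat
  assumes n_pos: "0 < n"
begin

text \<open>A rotational lift is the lift to \<open>\<real>\<close> of a rotational set, started at one of its points.\<close>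

definition rotational_lift :: "(nat \<Rightarrow> real) \<Rightarrow> bool" where
  "rotational_lift L \<longleftrightarrow> strict_mono L \<and> (\<forall>j. L (j + n) = L j + 1) \<and> 0 \<le> L 0 \<and> L 0 < 1
     \<and> (\<forall>j. real d * L j - L (j + P) \<in> \<int>)"

definition lift_of :: "real set \<Rightarrow> nat \<Rightarrow> nat \<Rightarrow> real" where
  "lift_of A i j = sorted_list_of_set A ! ((i + j) mod n) + real ((i + j) div n)"

definition set_of_lift :: "(nat \<Rightarrow> real) \<Rightarrow> real set" where
  "set_of_lift L = frac ` L ` {..<n}"

definition wrap_index :: "(nat \<Rightarrow> real) \<Rightarrow> nat" where
  "wrap_index L = (LEAST j. 1 \<le> L j)"

definition base_index :: "(nat \<Rightarrow> real) \<Rightarrow> nat" where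
  "base_index L = n - wrap_index L"

context
  fixes L assumes L: "rotational_lift L"
begin

lemma lift_less: "i < j \<Longrightarrow> L i < L j"
  using L by (simp add: rotational_lift_def strict_mono_less)

lemma lift_le: "i \<le> j \<Longrightarrow> L i \<le> L j"
  using L by (simp add: rotational_lift_def strict_mono_less_eq)

lemma lift_add_period: "L (j + n) = L j + 1"
  using L by (simp add: rotational_lift_def)

lemma lift_add_mult: "L (j + c * n) = L j + real c"
proof (induction c)
  case (Suc c)
  then show ?case using lift_add_period[of "j + c * n"] by (simp add: algebra_simps)
qed simp

lemma lift_0_bounds: "0 \<le> L 0" "L 0 < 1"
  using L by (simp_all add: rotational_lift_def)

lemma lift_Ints: "real d * L j - L (j + P) \<in> \<int>"
  using L by (simp add: rotational_lift_def)

lemma lift_nonneg: "0 \<le> L j"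
  using lift_0_bounds lift_le[of 0 j] by simp

lemma lift_less_2: "j < n \<Longrightarrow> L j < 2"
  using lift_less[of j n] lift_add_period[of 0] lift_0_bounds by simp

lemma one_le_lift_period: "1 \<le> L n"
  using lift_add_period[of 0] lift_0_bounds by simp

lemma wrap_index_ge: "1 \<le> L (wrap_index L)"
  unfolding wrap_index_def using one_le_lift_period by (rule LeastI)

lemma wrap_index_le: "wrap_index L \<le> n"
  unfolding wrap_index_def using one_le_lift_period by (rule Least_le)

lemma less_wrap_index: "j < wrap_index L \<Longrightarrow> L j < 1"
  unfolding wrap_index_def using not_less_Least by force

lemma wrap_index_pos: "0 < wrap_index L"
  using wrap_index_ge lift_0_bounds by (cases "wrap_index L") auto

abbreviation point :: "nat \<Rightarrow> real" where
  "point j \<equiv> L (wrap_index L + j) - 1"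

lemma point_range: "j < n \<Longrightarrow> 0 \<le> point j \<and> point j < 1"
proof -
  assume j: "j < n"
  have "L (wrap_index L + j) \<le> L (wrap_index L - 1 + n)"
    using j wrap_index_pos by (intro lift_le) linarith
  moreover have "L (wrap_index L - 1) < 1"
    using wrap_index_pos by (intro less_wrap_index) linarith
  ultimately show ?thesis
    using wrap_index_ge lift_le[of "wrap_index L" "wrap_index L + j"]
      lift_add_period[of "wrap_index L - 1"] by linarith
qed

lemma set_of_lift_eq: "set_of_lift L = point ` {..<n}"
proof (intro equalityI subsetI)
  fix x assume "x \<in> set_of_lift L"
  then obtain j where j: "j < n" "x = frac (L j)" unfolding set_of_lift_def by auto
  show "x \<in> point ` {..<n}"
  proof (cases "j < wrap_index L")
    case True
    then have "frac (L j) = point (j + n - wrap_index L)"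
      using less_wrap_index lift_nonneg lift_add_period[of j] wrap_index_le by (simp add: frac_eq)
    then show ?thesis using j True by auto
  next
    case False
    then have "1 \<le> L j" using lift_le[of "wrap_index L" j] wrap_index_ge by simp
    then have "frac (L j) = point (j - wrap_index L)"
      using False lift_less_2[OF j(1)] by (subst frac_unique_iff) (auto simp: Ints_def)
    then show ?thesis using j by (intro image_eqI[of _ _ "j - wrap_index L"]) auto
  qed
next
  fix x assume "x \<in> point ` {..<n}"
  then obtain j where j: "j < n" "x = point j" by auto
  show "x \<in> set_of_lift L"
  proof (cases "wrap_index L + j < n")
    case True
    have "1 \<le> L (wrap_index L + j)"
      using lift_le[of "wrap_index L" "wrap_index L + j"] wrap_index_ge by simp
    then have "frac (L (wrap_index L + j)) = point j"
      using lift_less_2[OF True] by (subst frac_unique_iff) (auto simp: Ints_def)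
    then show ?thesis unfolding set_of_lift_def using True j by force
  next
    case False
    define j' where "j' = wrap_index L + j - n"
    have j': "j' < wrap_index L" "wrap_index L + j = j' + n" unfolding j'_def using False j by auto
    then have "frac (L j') = point j"
      using less_wrap_index lift_nonneg by (simp add: lift_add_period frac_eq)
    moreover have "j' < n" using j' wrap_index_le by simp
    ultimately show ?thesis unfolding set_of_lift_def using j(2) by force
  qed
qed

lemma sorted_list_of_set_of_lift: "sorted_list_of_set (set_of_lift L) = map point [0..<n]"
proof (rule strict_sorted_equal)
  show "sorted_wrt (<) (map point [0..<n])"
    by (auto simp: sorted_wrt_map lift_less intro: sorted_wrt_mono_rel[OF _ sorted_wrt_upt])
  have "finite (set_of_lift L)" by (simp add: set_of_lift_def)
  then show "set (sorted_list_of_set (set_of_lift L)) = set (map point [0..<n])"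
    by (simp add: set_of_lift_eq atLeast0LessThan)
qed simp

lemma rotational_set_of_lift: "rotational_set d n P (set_of_lift L)"
  unfolding rotational_set_def
proof (intro conjI allI impI)
  show "set_of_lift L \<subseteq> {0..<1}" using point_range by (auto simp: set_of_lift_eq)
  show "finite (set_of_lift L)" by (simp add: set_of_lift_def)
  then show "card (set_of_lift L) = n"
    by (metis sorted_list_of_set_of_lift length_map length_upt length_sorted_list_of_set minus_nat.diff_0)
  fix j assume j: "j < n"
  let ?c = "(j + P) div n" and ?j' = "(j + P) mod n"
  have "?j' < n" using n_pos by simp
  have "L (wrap_index L + j + P) = L (wrap_index L + ?j') + real ?c"
    using lift_add_mult[of "wrap_index L + ?j'" ?c] by (simp add: algebra_simps)
  then have "real d * point j - point ?j' = (real d * L (wrap_index L + j) - L (wrap_index L + j + P)) + real ?c - real d + 1"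
    by (simp add: algebra_simps)
  also have "\<dots> \<in> \<int>" using lift_Ints[of "wrap_index L + j"] by (simp add: add.assoc)
  finally have "frac (real d * point j) = point ?j'"
    using point_range[OF \<open>?j' < n\<close>] by (simp add: frac_unique_iff)
  then show "sigma d (sorted_list_of_set (set_of_lift L) ! j) = sorted_list_of_set (set_of_lift L) ! ?j'"
    using j \<open>?j' < n\<close> by (simp add: sorted_list_of_set_of_lift sigma_def)
qed

lemma base_index_less: "base_index L < n"
  using wrap_index_pos wrap_index_le by (simp add: base_index_def)

lemma lift_of_set_of_lift: "lift_of (set_of_lift L) (base_index L) = L"
proof
  fix j
  let ?x = "base_index L + j"
  have "lift_of (set_of_lift L) (base_index L) j = point (?x mod n) + real (?x div n)"
    using n_pos by (simp add: lift_of_def sorted_list_of_set_of_lift)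
  also have "\<dots> = L (wrap_index L + ?x mod n + (?x div n) * n) - 1"
    by (simp only: lift_add_mult)
  also have "wrap_index L + ?x mod n + (?x div n) * n = j + n"
    using wrap_index_le by (simp add: base_index_def)
  finally show "lift_of (set_of_lift L) (base_index L) j = L j" by (simp add: lift_add_period)
qed

end

context
  fixes A i assumes A: "rotational_set d n P A" and i: "i < n"
begin

abbreviation u :: "real list" where "u \<equiv> sorted_list_of_set A"

lemma finite_A: "finite A" and length_u: "length u = n"
  using A by (simp_all add: rotational_set_def)

lemma u_range: "j < n \<Longrightarrow> 0 \<le> u ! j \<and> u ! j < 1"
  using A finite_A length_u unfolding rotational_set_def
  by (metis atLeastLessThan_iff nth_mem set_sorted_list_of_set subsetD)

lemma u_less: "a < b \<Longrightarrow> b < n \<Longrightarrow> u ! a < u ! b"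
  using strict_sorted_list_of_set[of A] length_u by (simp add: sorted_wrt_iff_nth_less)

lemma frac_mult_u: "j < n \<Longrightarrow> frac (real d * u ! j) = u ! ((j + P) mod n)"
  using A by (simp add: rotational_set_def sigma_def)

lemma lift_of_Suc: "lift_of A i j < lift_of A i (Suc j)"
proof (cases "Suc ((i + j) mod n) = n")
  case True
  then have "Suc (i + j) mod n = 0" "Suc (i + j) div n = Suc ((i + j) div n)"
    using mod_Suc[of "i + j" n] div_Suc[of "i + j" n] by auto
  moreover have "u ! ((i + j) mod n) < 1" "0 \<le> u ! 0"
    using u_range[of "(i + j) mod n"] u_range[of 0] n_pos by auto
  ultimately show ?thesis by (simp add: lift_of_def)
next
  case False
  then have "Suc (i + j) mod n = Suc ((i + j) mod n)" "Suc (i + j) div n = (i + j) div n"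
    using mod_Suc[of "i + j" n] div_Suc[of "i + j" n] by auto
  moreover have "u ! ((i + j) mod n) < u ! Suc ((i + j) mod n)"
    using False mod_less_divisor[OF n_pos, of "i + j"] by (intro u_less) linarith+
  ultimately show ?thesis by (simp add: lift_of_def)
qed

lemma rotational_lift_lift_of: "rotational_lift (lift_of A i)"
  unfolding rotational_lift_def
proof (intro conjI allI)
  show "strict_mono (lift_of A i)" by (simp add: strict_mono_Suc_iff lift_of_Suc)
  fix j
  show "lift_of A i (j + n) = lift_of A i j + 1"
    using n_pos by (simp add: lift_of_def flip: add.assoc)
  let ?a = "(i + j) mod n"
  have "real d * u ! ?a - u ! ((i + j + P) mod n) \<in> \<int>"
    using frac_mult_u[of ?a] n_pos by (simp add: mod_add_left_eq frac_unique_iff)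
  then have "real d * u ! ?a - u ! ((i + j + P) mod n)
      + (real d * real ((i + j) div n) - real ((i + j + P) div n)) \<in> \<int>"
    by (intro Ints_add) auto
  then show "real d * lift_of A i j - lift_of A i (j + P) \<in> \<int>"
    by (simp add: lift_of_def algebra_simps)
qed (use i u_range[OF i] in \<open>simp_all add: lift_of_def\<close>)

lemma set_of_lift_lift_of: "set_of_lift (lift_of A i) = A"
proof -
  have "frac (lift_of A i j) = u ! ((i + j) mod n)" for j
    using u_range[of "(i + j) mod n"] n_pos by (simp add: lift_of_def frac_unique_iff)
  then have "set_of_lift (lift_of A i) = (\<lambda>j. u ! j) ` (\<lambda>j. (i + j) mod n) ` {..<n}"
    by (simp add: set_of_lift_def image_image)
  also have "(\<lambda>j. (i + j) mod n) ` {..<n} = {..<n}"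
  proof (intro equalityI subsetI)
    fix x assume "x \<in> {..<n}"
    then have "x = (i + (x + n - i) mod n) mod n" using i by (simp add: mod_add_right_eq)
    then show "x \<in> (\<lambda>j. (i + j) mod n) ` {..<n}"
      using n_pos by (intro image_eqI[of _ _ "(x + n - i) mod n"]) auto
  qed (use n_pos in auto)
  also have "(\<lambda>j. u ! j) ` {..<n} = set u"
    using length_u by (auto simp: in_set_conv_nth)
  also have "set u = A" using finite_A by simp
  finally show ?thesis .
qed

lemma base_index_lift_of: "base_index (lift_of A i) = i"
proof -
  have "wrap_index (lift_of A i) = n - i"
    unfolding wrap_index_def
  proof (rule Least_equality)
    show "1 \<le> lift_of A i (n - i)"
      using i u_range[of 0] n_pos by (simp add: lift_of_def)
    fix j assume j: "1 \<le> lift_of A i j"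
    show "n - i \<le> j"
    proof (rule ccontr)
      assume "\<not> n - i \<le> j"
      then have "i + j < n" by linarith
      then show False using j u_range[of "i + j"] by (simp add: lift_of_def)
    qed
  qed
  then show ?thesis using i by (simp add: base_index_def)
qed

end

lemma bij_betw_lift_of:
  "bij_betw (\<lambda>(A, i). lift_of A i) ({A. rotational_set d n P A} \<times> {..<n}) {L. rotational_lift L}"
  by (rule bij_betw_byWitness[where f' = "\<lambda>L. (set_of_lift L, base_index L)"])
    (auto simp: set_of_lift_lift_of base_index_lift_of rotational_lift_lift_of
      lift_of_set_of_lift rotational_set_of_lift base_index_less)

end


locale rotation_setting =
  fixes d q p k :: nat
  assumes d_ge_2: "2 \<le> d" and q_ge_2: "2 \<le> q" and p_pos: "0 < p" and p_less_q: "p < q"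
    and coprime_pq: "coprime p q" and k_pos: "0 < k"
begin

abbreviation n :: nat where "n \<equiv> k * q"

abbreviation P :: nat where "P \<equiv> k * p"

sublocale circle_lifts d n P
  using k_pos q_ge_2 by unfold_locales simp

lemma P_pos: "0 < P" and P_less_n: "P < n" and q_mult_P: "q * P = p * n" and n_ge_2: "2 \<le> n"
  using k_pos p_pos p_less_q q_ge_2 mult_le_mono[of 1 k 2 q] by simp_all

lemma orbit_mod_eq: "(\<lambda>i. (j + i * P) mod n) ` {..<q} = (\<lambda>l. j mod k + k * l) ` {..<q}"
proof -
  have orbit: "(j + i * P) mod n = j mod k + k * ((j div k + i * p) mod q)" for i
  proof -
    have "j + i * P = j mod k + k * (j div k + i * p)" by (simp add: algebra_simps)
    then show ?thesis using k_pos by (simp add: add_mult_mod_mult)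
  qed
  show ?thesis
  proof (intro equalityI subsetI)
    fix x assume "x \<in> (\<lambda>l. j mod k + k * l) ` {..<q}"
    then obtain l where "l < q" "x = j mod k + k * l" by auto
    moreover obtain i where "i < q" "(j div k + i * p) mod q = l"
      using coprime_ex_mod_add_mult_eq[OF coprime_pq \<open>l < q\<close>] by blast
    ultimately show "x \<in> (\<lambda>i. (j + i * P) mod n) ` {..<q}" by (auto simp: orbit)
  next
    fix x assume "x \<in> (\<lambda>i. (j + i * P) mod n) ` {..<q}"
    then obtain i where "x = (j + i * P) mod n" by auto
    then show "x \<in> (\<lambda>l. j mod k + k * l) ` {..<q}"
      using q_ge_2 by (intro image_eqI[of _ _ "(j div k + i * p) mod q"]) (simp_all add: orbit)
  qed
qed

lemma recurrence_solution_pos_iff: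
  assumes per: "periodic n m" and nonneg: "\<And>j. 0 \<le> m j"
  shows "0 < recurrence_solution d q P m j \<longleftrightarrow> (\<exists>l<q. 0 < m (j mod k + k * l))"
proof -
  let ?T = "\<lambda>i. real d ^ (q - 1 - i) * m (j + i * P)"
  have T: "0 \<le> ?T i" "?T i \<noteq> 0 \<longleftrightarrow> 0 < m ((j + i * P) mod n)" for i
    using d_ge_2 nonneg[of "j + i * P"] by (simp_all add: periodic_mod[OF per] less_le)
  have "0 < recurrence_solution d q P m j \<longleftrightarrow> sum ?T {..<q} \<noteq> 0"
    using one_less_real_power[OF d_ge_2, of q] q_ge_2 T(1) sum_nonneg[of "{..<q}" ?T]
    by (simp add: recurrence_solution_def zero_less_divide_iff less_le)
  also have "\<dots> \<longleftrightarrow> (\<exists>x\<in>(\<lambda>i. (j + i * P) mod n) ` {..<q}. 0 < m x)"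
    using sum_nonneg_eq_0_iff[of "{..<q}" ?T] T by simp
  finally show ?thesis by (simp add: orbit_mod_eq Bex_def)
qed

definition gap :: "(nat \<Rightarrow> real) \<Rightarrow> nat \<Rightarrow> real" where
  "gap L j = L (Suc j) - L j"

text \<open>\<open>\<sigma>\<^sub>d\<close> maps the \<open>j\<close>-th gap onto the \<open>(j + P)\<close>-th one, winding \<open>turns L j\<close> times around
  the circle on the way.\<close>

definition turns :: "(nat \<Rightarrow> real) \<Rightarrow> nat \<Rightarrow> real" where
  "turns L j = real d * gap L j - gap L (j + P)"

definition offset :: "(nat \<Rightarrow> real) \<Rightarrow> real" where
  "offset L = real d * L 0 - L P"

definition turns_matrix :: "(nat \<Rightarrow> real) \<Rightarrow> nat list list" where
  "turns_matrix L = matrix_of k q (\<lambda>j. nat \<lfloor>turns L j\<rfloor>)"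

lemma lift_eq_sum_gap: "L j = L 0 + (\<Sum>l<j. gap L l)"
  by (induction j) (simp_all add: gap_def)

lemma offset_eq_sum_gap: "offset L = (real d - 1) * L 0 - (\<Sum>l<P. gap L l)"
  using lift_eq_sum_gap[of L P] by (simp add: offset_def algebra_simps)

lemma turns_rec: "gap L (j + P) = real d * gap L j - turns L j"
  by (simp add: turns_def)

context
  fixes L assumes L: "rotational_lift L"
begin

lemma gap_pos: "0 < gap L j"
  using lift_less[OF L, of j "Suc j"] by (simp add: gap_def)

lemma gap_less_1: "gap L j < 1"
  using lift_less[OF L, of "Suc j" "j + n"] n_ge_2 lift_add_period[OF L, of j]
  by (simp add: gap_def)

lemma periodic_gap: "periodic n (gap L)"
  by (simp add: periodic_def gap_def lift_add_period[OF L] flip: add_Suc)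

lemma periodic_turns: "periodic n (turns L)"
proof -
  have "gap L (j + n) = gap L j" "gap L (j + n + P) = gap L (j + P)" for j
    using periodic_gap[unfolded periodic_def, rule_format, of j]
      periodic_gap[unfolded periodic_def, rule_format, of "j + P"] by (simp_all add: ac_simps)
  then show ?thesis by (simp add: periodic_def turns_def)
qed

lemma turns_Ints: "turns L j \<in> \<int>"
proof -
  have "turns L j = (real d * L (Suc j) - L (Suc j + P)) - (real d * L j - L (j + P))"
    by (simp add: turns_def gap_def algebra_simps)
  then show ?thesis using lift_Ints[OF L, of j] lift_Ints[OF L, of "Suc j"] by (metis Ints_diff)
qed

lemma turns_nonneg: "0 \<le> turns L j"
proof (rule Ints_nonneg_if_greater_minus_1[OF turns_Ints])
  have "0 < real d * gap L j" using gap_pos d_ge_2 by simp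
  then show "-1 < turns L j" using gap_less_1[of "j + P"] by (simp add: turns_def)
qed

lemma of_nat_turns: "real (nat \<lfloor>turns L j\<rfloor>) = turns L j"
proof -
  obtain z where "turns L j = of_int z" using turns_Ints by (auto elim: Ints_cases)
  then show ?thesis using turns_nonneg[of j] by simp
qed

lemma gap_eq_recurrence_solution: "gap L j = recurrence_solution d q P (turns L) j"
proof (rule periodic_recurrence_unique)
  show "gap L (j + P) = real d * gap L j - turns L j" for j by (rule turns_rec)
  show "periodic (q * P) (gap L)" unfolding q_mult_P by (rule periodic_mult[OF periodic_gap])
qed (use d_ge_2 q_ge_2 in simp_all)

lemma sum_turns: "(\<Sum>j<n. turns L j) = real d - 1"
proof -
  have "(real d - 1) * (\<Sum>j<n. gap L j) = (\<Sum>j<n. turns L j)"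
    by (rule sum_periodic_recurrence[OF periodic_gap]) (rule turns_rec)
  moreover have "(\<Sum>j<n. gap L j) = 1"
    using sum_lessThan_telescope[of L n] lift_add_period[OF L, of 0] by (simp add: gap_def)
  ultimately show ?thesis by simp
qed

lemma offset_Ints: "offset L \<in> \<int>"
  using lift_Ints[OF L, of 0] by (simp add: offset_def)

lemma offset_range: "0 \<le> offset L" "offset L < real d - 1"
proof -
  have "L 0 < L P" "L P < L 0 + 1"
    using lift_less[OF L, of 0 P] lift_less[OF L, of P n] P_pos P_less_n lift_add_period[OF L, of 0]
    by simp_all
  moreover have "L 0 \<le> real d * L 0" "(real d - 1) * L 0 < real d - 1"
    using lift_0_bounds[OF L] d_ge_2 by (simp_all add: mult_le_cancel_right1)
  ultimately have "-1 < offset L" "offset L < real d - 1"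
    by (simp_all add: offset_def algebra_simps)
  then show "0 \<le> offset L" "offset L < real d - 1"
    using Ints_nonneg_if_greater_minus_1[OF offset_Ints] by simp_all
qed

lemma turns_matrix_mem: "turns_matrix L \<in> nonzero_row_arrays k q (d - 1)"
  unfolding row_arrays_def
proof (intro CollectI conjI ballI)
  show "length (turns_matrix L) = k" by (simp add: turns_matrix_def matrix_of_def)
  fix r assume "r \<in> set (turns_matrix L)"
  then obtain r0 where r0: "r0 < k" "r = map (\<lambda>l. nat \<lfloor>turns L (r0 + k * l)\<rfloor>) [0..<q]"
    by (auto simp: turns_matrix_def matrix_of_def)
  then show "length r = q" by simp
  have "0 < recurrence_solution d q P (turns L) r0"
    using gap_pos gap_eq_recurrence_solution by simp
  then obtain l where "l < q" "0 < turns L (r0 + k * l)"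
    using r0(1) by (auto simp: recurrence_solution_pos_iff periodic_turns turns_nonneg)
  then have "0 < nat \<lfloor>turns L (r0 + k * l)\<rfloor>" "nat \<lfloor>turns L (r0 + k * l)\<rfloor> \<in> set r"
    using r0(2) of_nat_turns[of "r0 + k * l"] by auto
  then show "0 < sum_list r" using member_le_sum_list_nat less_le_trans by blast
next
  have "real (sum_list (map sum_list (turns_matrix L))) = (\<Sum>j<n. turns L j)"
    by (simp add: turns_matrix_def sum_list_matrix_of of_nat_turns)
  then show "sum_list (map sum_list (turns_matrix L)) = d - 1"
    using sum_turns d_ge_2 by simp
qed

end

definition gaps_of_turns :: "nat list list \<Rightarrow> nat \<Rightarrow> real" where
  "gaps_of_turns R = recurrence_solution d q P (\<lambda>j. real (matrix_entry k q R j))"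

text \<open>The value of \<open>L 0\<close> is forced by \<open>offset L = t\<close> and \<open>L P = L 0 + (\<Sum>l<P. gap L l)\<close>.\<close>

definition lift_of_turns :: "nat list list \<Rightarrow> nat \<Rightarrow> nat \<Rightarrow> real" where
  "lift_of_turns R t j =
     ((\<Sum>l<P. gaps_of_turns R l) + real t) / (real d - 1) + (\<Sum>l<j. gaps_of_turns R l)"

lemma periodic_real_matrix_entry: "periodic n (\<lambda>j. real (matrix_entry k q R j))"
  using periodic_matrix_entry[of k q R] by (simp add: periodic_def)

lemma periodic_gaps_of_turns: "periodic n (gaps_of_turns R)"
  unfolding gaps_of_turns_def by (rule periodic_recurrence_solution[OF periodic_real_matrix_entry])

lemma gaps_of_turns_rec: "gaps_of_turns R (j + P) = real d * gaps_of_turns R j - real (matrix_entry k q R j)"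
proof -
  have "periodic (q * P) (\<lambda>j. real (matrix_entry k q R j))"
    unfolding q_mult_P by (rule periodic_mult[OF periodic_real_matrix_entry])
  then show ?thesis
    unfolding gaps_of_turns_def using d_ge_2 q_ge_2 by (simp add: recurrence_solution_rec)
qed

lemma gap_lift_of_turns: "gap (lift_of_turns R t) = gaps_of_turns R"
  by (simp add: fun_eq_iff gap_def lift_of_turns_def)

lemma turns_lift_of_turns: "turns (lift_of_turns R t) j = real (matrix_entry k q R j)"
  by (simp add: turns_def gap_lift_of_turns gaps_of_turns_rec)

lemma offset_lift_of_turns: "offset (lift_of_turns R t) = real t"
proof -
  let ?S = "\<Sum>l<P. gaps_of_turns R l"
  let ?c = "(?S + real t) / (real d - 1)"
  have "lift_of_turns R t 0 = ?c" "lift_of_turns R t P = ?c + ?S"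
    by (simp_all add: lift_of_turns_def)
  moreover have "real d * x - (x + ?S) = (real d - 1) * x - ?S" for x
    by (simp add: algebra_simps)
  ultimately have "offset (lift_of_turns R t) = (real d - 1) * ?c - ?S"
    by (simp only: offset_def)
  also have "\<dots> = real t" using d_ge_2 by simp
  finally show ?thesis .
qed

context
  fixes R t assumes R: "R \<in> nonzero_row_arrays k q (d - 1)" and t: "t < d - 1"
begin

lemma gaps_of_turns_pos: "0 < gaps_of_turns R j"
proof -
  have r: "j mod k < k" using k_pos by simp
  then have "0 < sum_list (R ! (j mod k))" "length (R ! (j mod k)) = q"
    using R by (auto simp: row_arrays_def)
  then obtain l where "l < q" "0 < R ! (j mod k) ! l"
    by (metis gr0I in_set_conv_nth sum_list_eq_0_iff)
  then show ?thesis
    unfolding gaps_of_turns_def using r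
    by (subst recurrence_solution_pos_iff[OF periodic_real_matrix_entry]) (auto simp: matrix_entry_add_mult)
qed

lemma sum_gaps_of_turns: "(\<Sum>j<n. gaps_of_turns R j) = 1"
proof -
  have "matrix_of k q (matrix_entry k q R) = R"
    using R by (simp add: row_arrays_def matrix_of_matrix_entry)
  then have entries: "sum_list (map sum_list R) = (\<Sum>j<n. matrix_entry k q R j)"
    using sum_list_matrix_of[of k q "matrix_entry k q R"] by simp
  have "(real d - 1) * (\<Sum>j<n. gaps_of_turns R j) = (\<Sum>j<n. real (matrix_entry k q R j))"
    by (rule sum_periodic_recurrence[OF periodic_gaps_of_turns]) (rule gaps_of_turns_rec)
  also have "\<dots> = real (sum_list (map sum_list R))" by (simp add: entries)
  also have "\<dots> = real d - 1" using R d_ge_2 by (simp add: row_arrays_def)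
  finally show ?thesis using d_ge_2 by simp
qed

lemma lift_of_turns_add_period: "lift_of_turns R t (j + n) = lift_of_turns R t j + 1"
proof (induction j)
  case 0
  then show ?case using sum_gaps_of_turns by (simp add: lift_of_turns_def)
next
  case (Suc j)
  have "gaps_of_turns R (j + n) = gaps_of_turns R j"
    using periodic_gaps_of_turns by (simp add: periodic_def)
  then show ?case using Suc.IH by (simp add: lift_of_turns_def)
qed

lemma rotational_lift_lift_of_turns: "rotational_lift (lift_of_turns R t)"
  unfolding rotational_lift_def
proof (intro conjI allI)
  let ?L = "lift_of_turns R t"
  show mono: "strict_mono ?L"
    by (simp add: strict_mono_Suc_iff lift_of_turns_def gaps_of_turns_pos)
  show "?L (j + n) = ?L j + 1" for j by (rule lift_of_turns_add_period)
  let ?S = "\<Sum>l<P. gaps_of_turns R l"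
  have "?L 0 < ?L P" "?L P < ?L n"
    using mono P_pos P_less_n by (simp_all add: strict_mono_less)
  then have "0 < ?S" "?S < 1"
    using lift_of_turns_add_period[of 0] by (simp_all add: lift_of_turns_def)
  moreover have "real t + 2 \<le> real d" using t by linarith
  ultimately show "0 \<le> ?L 0" "?L 0 < 1"
    by (simp_all add: lift_of_turns_def divide_less_eq)
  show "real d * ?L j - ?L (j + P) \<in> \<int>" for j
  proof (induction j)
    case 0
    then show ?case using offset_lift_of_turns by (simp add: offset_def)
  next
    case (Suc j)
    have "real d * ?L (Suc j) - ?L (Suc j + P) = (real d * ?L j - ?L (j + P)) + turns ?L j"
      by (simp add: turns_def gap_def algebra_simps)
    then show ?case using Suc by (simp add: turns_lift_of_turns)
  qed
qed

lemma turns_matrix_lift_of_turns: "turns_matrix (lift_of_turns R t) = R"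
  using R by (simp add: turns_matrix_def turns_lift_of_turns matrix_of_matrix_entry row_arrays_def)

end

lemma rotational_lift_eqI:
  assumes L: "rotational_lift L" and L': "rotational_lift L'"
    and turns: "turns L = turns L'" and offset: "offset L = offset L'"
  shows "L = L'"
proof -
  have gap: "gap L = gap L'"
    using gap_eq_recurrence_solution[OF L] gap_eq_recurrence_solution[OF L'] turns by auto
  have "(real d - 1) * L 0 = (real d - 1) * L' 0"
    using offset gap by (simp add: offset_eq_sum_gap)
  then have "L 0 = L' 0" using d_ge_2 by simp
  show ?thesis
  proof
    fix j
    have "L j = L 0 + (\<Sum>l<j. gap L l)" by (rule lift_eq_sum_gap)
    also have "\<dots> = L' 0 + (\<Sum>l<j. gap L' l)" using \<open>L 0 = L' 0\<close> gap by simp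
    also have "\<dots> = L' j" by (rule lift_eq_sum_gap[symmetric])
    finally show "L j = L' j" .
  qed
qed

context
  fixes L assumes L: "rotational_lift L"
begin

lemma of_nat_offset: "real (nat \<lfloor>offset L\<rfloor>) = offset L"
proof -
  obtain z where "offset L = of_int z" using offset_Ints[OF L] by (auto elim: Ints_cases)
  then show ?thesis using offset_range[OF L] by simp
qed

lemma nat_offset_less: "nat \<lfloor>offset L\<rfloor> < d - 1"
proof -
  have "real (nat \<lfloor>offset L\<rfloor>) < real (d - 1)"
    unfolding of_nat_offset using offset_range[OF L] d_ge_2 by simp
  then show ?thesis by (simp only: of_nat_less_iff)
qed

lemma lift_of_turns_turns_matrix: "lift_of_turns (turns_matrix L) (nat \<lfloor>offset L\<rfloor>) = L"
proof (rule rotational_lift_eqI)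
  show "rotational_lift (lift_of_turns (turns_matrix L) (nat \<lfloor>offset L\<rfloor>))"
    by (rule rotational_lift_lift_of_turns[OF turns_matrix_mem[OF L] nat_offset_less])
  have "matrix_entry k q (turns_matrix L) j = nat \<lfloor>turns L j\<rfloor>" for j
  proof -
    have "matrix_entry k q (turns_matrix L) j = matrix_entry k q (turns_matrix L) (j mod n)"
      by (simp add: periodic_mod[OF periodic_matrix_entry])
    also have "\<dots> = nat \<lfloor>turns L (j mod n)\<rfloor>"
      using n_pos by (simp add: turns_matrix_def matrix_entry_matrix_of)
    finally show ?thesis by (simp add: periodic_mod[OF periodic_turns[OF L]])
  qed
  then show "turns (lift_of_turns (turns_matrix L) (nat \<lfloor>offset L\<rfloor>)) = turns L"
    by (simp add: fun_eq_iff turns_lift_of_turns of_nat_turns[OF L])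
  show "offset (lift_of_turns (turns_matrix L) (nat \<lfloor>offset L\<rfloor>)) = offset L"
    by (simp add: offset_lift_of_turns of_nat_offset)
qed (rule L)

end

lemma bij_betw_turns_matrix:
  "bij_betw (\<lambda>L. (turns_matrix L, nat \<lfloor>offset L\<rfloor>)) {L. rotational_lift L}
     (nonzero_row_arrays k q (d - 1) \<times> {..<d - 1})"
proof (rule bij_betw_byWitness[where f' = "\<lambda>(R, t). lift_of_turns R t"])
  show "(\<lambda>L. (turns_matrix L, nat \<lfloor>offset L\<rfloor>)) ` {L. rotational_lift L}
      \<subseteq> nonzero_row_arrays k q (d - 1) \<times> {..<d - 1}"
    using turns_matrix_mem nat_offset_less by blast
  show "(\<lambda>(R, t). lift_of_turns R t) ` (nonzero_row_arrays k q (d - 1) \<times> {..<d - 1})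
      \<subseteq> {L. rotational_lift L}"
    by (auto simp: rotational_lift_lift_of_turns)
next
  show "\<forall>L\<in>{L. rotational_lift L}.
      (\<lambda>(R, t). lift_of_turns R t) (turns_matrix L, nat \<lfloor>offset L\<rfloor>) = L"
    by (simp add: lift_of_turns_turns_matrix)
  show "\<forall>Rt\<in>nonzero_row_arrays k q (d - 1) \<times> {..<d - 1}.
      (\<lambda>L. (turns_matrix L, nat \<lfloor>offset L\<rfloor>)) ((\<lambda>(R, t). lift_of_turns R t) Rt) = Rt"
    by (auto simp: turns_matrix_lift_of_turns offset_lift_of_turns)
qed

lemma card_rotational_sets:
  "n * card {A. rotational_set d n P A} = (d - 1) * card (nonzero_row_arrays k q (d - 1))"
proof -
  have "bij_betw ((\<lambda>L. (turns_matrix L, nat \<lfloor>offset L\<rfloor>)) \<circ> (\<lambda>(A, i). lift_of A i))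
      ({A. rotational_set d n P A} \<times> {..<n}) (nonzero_row_arrays k q (d - 1) \<times> {..<d - 1})"
    by (rule bij_betw_trans[OF bij_betw_lift_of bij_betw_turns_matrix])
  then have "card ({A. rotational_set d n P A} \<times> {..<n})
      = card (nonzero_row_arrays k q (d - 1) \<times> {..<d - 1})"
    by (rule bij_betw_same_card)
  then show ?thesis by (simp add: card_cartesian_product mult.commute)
qed

end


lemma Nrot_mult_eq:
  fixes d q p k :: nat
  assumes "2 \<le> d" "2 \<le> q" "1 \<le> p" "p \<le> q - 1" "coprime p q" "1 \<le> k"
  shows "k * q * Nrot d p q k = (d - 1) * card (nonzero_row_arrays k q (d - 1))"
proof -
  interpret rotation_setting d q p k using assms by unfold_locales auto
  show ?thesis using card_rotational_sets by (simp add: Nrot_def)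
qed

lemma sum_binomial_Nrot:
  fixes d q p k :: nat
  assumes "2 \<le> d" "2 \<le> q" "1 \<le> p" "p \<le> q - 1" "coprime p q" "1 \<le> k"
  shows "(\<Sum>j=1..k. ((k - 1) choose (j - 1)) * Nrot d p q j) = (d - 2 + k * q) choose (d - 2)"
proof -
  have "k * q * (\<Sum>j=1..k. ((k - 1) choose (j - 1)) * Nrot d p q j)
      = (\<Sum>j=1..k. (k choose j) * (j * q * Nrot d p q j))"
    unfolding sum_distrib_left
  proof (rule sum.cong[OF refl])
    fix j assume "j \<in> {1..k}"
    then obtain i where "j = Suc i" by (cases j) auto
    then have "j * (k choose j) = k * ((k - 1) choose (j - 1))"
      using binomial_absorption[of i k] by simp
    then show "k * q * ((k - 1 choose (j - 1)) * Nrot d p q j) = (k choose j) * (j * q * Nrot d p q j)"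
      by (metis mult.assoc mult.left_commute)
  qed
  also have "\<dots> = (d - 1) * (\<Sum>j=1..k. (k choose j) * card (nonzero_row_arrays j q (d - 1)))"
    using Nrot_mult_eq[OF assms(1-5)] by (simp add: sum_distrib_left algebra_simps)
  also have "(\<Sum>j=1..k. (k choose j) * card (nonzero_row_arrays j q (d - 1)))
      = card (all_row_arrays k q (d - 1))"
  proof -
    have "nonzero_row_arrays 0 q (d - 1) = {}" using assms(1) by (auto simp: row_arrays_def)
    then show ?thesis
      by (simp add: card_all_row_arrays_binomial_sum atMost_atLeast0 sum.atLeast_Suc_atMost)
  qed
  also have "(d - 1) * card (all_row_arrays k q (d - 1)) = k * q * ((d - 2 + k * q) choose (d - 2))"
  proof -
    obtain e where d: "d = Suc (Suc e)" using assms(1) by (metis add_2_eq_Suc le_Suc_ex)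
    have "Suc e * ((e + k * q) choose Suc e) = (e + k * q) * ((e + k * q - 1) choose e)"
      by (rule binomial_absorption)
    also have "\<dots> = k * q * ((e + k * q) choose e)"
      using binomial_absorb_comp[of "e + k * q" e] by simp
    finally show ?thesis by (simp add: d card_all_row_arrays)
  qed
  finally show ?thesis using assms by simp
qed

theorem theorem3p6:
  fixes d q p :: nat
  assumes "d \<ge> 2" and "q \<ge> 2" and "1 \<le> p" and "p \<le> q - 1" and "coprime p q"
  shows "Nrot d p q 1 = (d - 2 + q) choose (d - 2)
    \<and> (\<forall>k. 2 \<le> k \<and> k \<le> d - 1 \<longrightarrow>
        int (Nrot d p q k) = int ((d - 2 + k * q) choose (d - 2))
          - (\<Sum>j = 1..k - 1. int ((k - 1) choose (j - 1)) * int (Nrot d p q j)))"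
proof (intro conjI allI impI)
  show "Nrot d p q 1 = (d - 2 + q) choose (d - 2)"
    using sum_binomial_Nrot[OF assms, of 1] by simp
  fix k assume k: "2 \<le> k \<and> k \<le> d - 1"
  have "(\<Sum>j = 1..k - 1. (k - 1 choose (j - 1)) * Nrot d p q j) + Nrot d p q k
      = (d - 2 + k * q) choose (d - 2)"
    using sum_binomial_Nrot[OF assms, of k] k
    by (cases k) (simp_all add: sum.atLeast_Suc_atMost_Suc_shift)
  then show "int (Nrot d p q k) = int ((d - 2 + k * q) choose (d - 2))
      - (\<Sum>j = 1..k - 1. int ((k - 1) choose (j - 1)) * int (Nrot d p q j))"
    by (simp flip: of_nat_add of_nat_mult of_nat_sum)
qed

end
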